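(* Let $(G,+,<)$ be an ordered abelian group (dense or discrete). Then $G$ is Dedekind complete if and only if $G$ satisfies Continuous Induction (CI).
   Context: An ordered abelian group $(G,+,<)$ is an abelian group with a linear order such that $x<y$ implies $x+z<y+z$ for all $x,y,z\in G$. A Dedekind cut is a nonempty downward closed subset $C\subseteq G$; it is proper if $C\neq G$. A gap is a proper cut with no least upper bound in $G$. $G$ is Dedekind complete if it has no gaps. Continuous Induction (CI) for $G$ is the statement: for every $S\subseteq G$, if (i) there is $g\in G$ with $(-\infty,g)\subseteq S$, and (ii) for every $x\in G$, if $(-\infty,x)\subseteq S$ then there is $y>x$ in $G$ with $(-\infty,y)\subseteq S$, then $S=G$. *)

theory Defs
  imports Main
begin

definition dedekind_cut :: "'a::linorder set \<Rightarrow> bool" where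
  "dedekind_cut C \<longleftrightarrow> C \<noteq> {} \<and> (\<forall>x\<in>C. \<forall>y. y \<le> x \<longrightarrow> y \<in> C)"

definition proper_cut :: "'a::linorder set \<Rightarrow> bool" where
  "proper_cut C \<longleftrightarrow> dedekind_cut C \<and> C \<noteq> UNIV"

definition has_lub :: "'a::linorder set \<Rightarrow> bool" where
  "has_lub C \<longleftrightarrow> (\<exists>l. (\<forall>x\<in>C. x \<le> l) \<and> (\<forall>u. (\<forall>x\<in>C. x \<le> u) \<longrightarrow> l \<le> u))"

definition gap :: "'a::linorder set \<Rightarrow> bool" where
  "gap C \<longleftrightarrow> proper_cut C \<and> \<not> has_lub C"

definition dedekind_complete :: "'a::linorder itself \<Rightarrow> bool" where
  "dedekind_complete _ \<longleftrightarrow> (\<forall>C::'a set. \<not> gap C)"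

definition continuous_induction :: "'a::linorder itself \<Rightarrow> bool" where
  "continuous_induction _ \<longleftrightarrow>
     (\<forall>S::'a set.
        (\<exists>g. {..<g} \<subseteq> S) \<and>
        (\<forall>x. {..<x} \<subseteq> S \<longrightarrow> (\<exists>y>x. {..<y} \<subseteq> S))
        \<longrightarrow> S = UNIV)"

end

theory Submission
  imports Defs
begin

text \<open>Neither direction uses the group structure: the equivalence holds in every linear order.
If \<open>G\<close> is complete and \<open>S\<close> satisfies the hypotheses of CI, the points \<open>x\<close> with \<open>(-\<infinity>,x) \<subseteq> S\<close>
form a cut; its supremum \<open>l\<close> would satisfy \<open>(-\<infinity>,l) \<subseteq> S\<close> and so could be pushed further,
hence the cut is everything and then \<open>S\<close> is everything. Conversely a gap \<open>C\<close> itself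
satisfies the hypotheses of CI: if \<open>(-\<infinity>,x) \<subseteq> C\<close>, then \<open>x \<in> C\<close> (else \<open>C\<close> has a supremum: \<open>x\<close>, or a greatest element below it)
and \<open>x\<close> is not the maximum of \<open>C\<close>, so \<open>C\<close> contains some \<open>y > x\<close>.\<close>

lemma has_lubI:
  assumes "\<forall>x\<in>C. x \<le> l" and "\<And>u. \<forall>x\<in>C. x \<le> u \<Longrightarrow> l \<le> u"
  shows "has_lub C"
  using assms unfolding has_lub_def by blast

lemma has_lub_if_greatest:
  assumes "x \<in> C" and "\<forall>y\<in>C. y \<le> x"
  shows "has_lub C"
  using assms by (intro has_lubI) auto

lemma has_lub_if_lessThan_subset_notin:
  assumes "dedekind_cut C" and "{..<x} \<subseteq> C" and "x \<notin> C"
  shows "has_lub (C::'a::linorder set)"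
proof (cases "\<exists>u<x. \<forall>c\<in>C. c \<le> u")
  case True
  then obtain u where "u < x" and "\<forall>c\<in>C. c \<le> u" by blast
  with assms(2) show ?thesis using has_lub_if_greatest by blast
next
  case False
  show ?thesis
  proof (rule has_lubI)
    show "\<forall>c\<in>C. c \<le> x"
      using assms(1,3) unfolding dedekind_cut_def by (meson linorder_le_cases)
    show "x \<le> u" if "\<forall>c\<in>C. c \<le> u" for u
      using that False by (meson not_le)
  qed
qed

lemma lessThan_subset_of_cut_without_lub:
  assumes "dedekind_cut C" and "\<not> has_lub C" and "{..<x} \<subseteq> C"
  obtains y where "x < y" and "{..<y} \<subseteq> (C::'a::linorder set)"
proof -
  have "x \<in> C"
    using assms has_lub_if_lessThan_subset_notin by blast
  then obtain y where "y \<in> C" "x < y"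
    using assms(2) has_lub_if_greatest by (metis not_le)
  then have "{..<y} \<subseteq> C"
    using assms(1) unfolding dedekind_cut_def by auto
  with \<open>x < y\<close> show thesis by (rule that)
qed

lemma continuous_induction_if_no_gap:
  assumes "\<forall>C::'a::linorder set. \<not> gap C"
  shows "continuous_induction TYPE('a)"
  unfolding continuous_induction_def
proof (intro allI impI)
  fix S :: "'a set"
  assume "(\<exists>g. {..<g} \<subseteq> S) \<and> (\<forall>x. {..<x} \<subseteq> S \<longrightarrow> (\<exists>y>x. {..<y} \<subseteq> S))"
  then have start: "\<exists>g. {..<g} \<subseteq> S"
    and step: "\<And>x. {..<x} \<subseteq> S \<Longrightarrow> \<exists>y>x. {..<y} \<subseteq> S"
    by blast+
  define C where "C = {x. {..<x} \<subseteq> S}"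
  have "dedekind_cut C"
    unfolding dedekind_cut_def C_def using start by auto
  have "C = UNIV"
  proof (rule ccontr)
    assume "C \<noteq> UNIV"
    with \<open>dedekind_cut C\<close> assms have "has_lub C"
      unfolding gap_def proper_cut_def by auto
    then obtain l where upper: "\<forall>x\<in>C. x \<le> l"
      and least: "\<And>u. \<forall>x\<in>C. x \<le> u \<Longrightarrow> l \<le> u"
      unfolding has_lub_def by blast
    have "{..<l} \<subseteq> S"
    proof
      fix z assume "z \<in> {..<l}"
      then obtain x where "x \<in> C" "z < x"
        using least by (metis lessThan_iff not_le)
      then show "z \<in> S" unfolding C_def by auto
    qed
    with step obtain y where "l < y" "{..<y} \<subseteq> S" by blast
    then show False using upper unfolding C_def by force
  qed
  have "s \<in> S" for s
  proof -
    have "{..<s} \<subseteq> S" using \<open>C = UNIV\<close> unfolding C_def by blast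
    with step show "s \<in> S" by auto
  qed
  then show "S = UNIV" by blast
qed

lemma no_gap_if_continuous_induction:
  assumes "continuous_induction TYPE('a::linorder)"
  shows "\<not> gap (C::'a set)"
proof
  assume "gap C"
  then have cut: "dedekind_cut C" and "C \<noteq> UNIV" and no_lub: "\<not> has_lub C"
    unfolding gap_def proper_cut_def by auto
  obtain c where "c \<in> C"
    using cut unfolding dedekind_cut_def by auto
  then have "{..<c} \<subseteq> C"
    using cut unfolding dedekind_cut_def by auto
  moreover have "\<exists>y>x. {..<y} \<subseteq> C" if "{..<x} \<subseteq> C" for x
    using lessThan_subset_of_cut_without_lub[OF cut no_lub that] by blast
  ultimately have "C = UNIV"
    using assms unfolding continuous_induction_def by blast
  with \<open>C \<noteq> UNIV\<close> show False ..
qed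

theorem proposition2p1:
  shows "dedekind_complete TYPE('a::linordered_ab_group_add) \<longleftrightarrow>
         continuous_induction TYPE('a)"
  unfolding dedekind_complete_def
  using continuous_induction_if_no_gap no_gap_if_continuous_induction by blast

end
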